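(* For all mutually disjoint $K,I,J\subseteq\mathbb N_n$ put $$\beta_{K,I,J}\doteq\frac{1}{\sqrt{2^{\,n-|I\cup J|}}}\,b_K\,\mathbf c_{I,J}=\frac{1}{\sqrt{2^{\,n-|I\cup J|}}}\sum_{A\subseteq K}(-2)^{|A|}\,\mathbf n_A\,\mathbf c^*_I\mathbf c_J .$$ Then: (1) $\mathfrak B\doteq\{\beta_{K,I,J}: K,I,J\subseteq\mathbb N_n \text{ pairwise disjoint}\}$ is an orthonormal basis of $\mathcal L^2(\mathcal F)$. In fact $\langle b_K\mathbf c_{A,B},b_L\mathbf c_{C,D}\rangle_{\mathcal L^2(\mathcal F)}=\delta_{AC}\delta_{BD}\delta_{KL}\,2^{\,n-|A\cup B|}$ whenever $K,A,B$ are mutually disjoint and $L,C,D$ are mutually disjoint. (2) For every $k\in\mathbb N_0$, $\mathfrak B\cap\mathcal O_k$ is an orthonormal basis of $\mathcal O_k$. Explicitly, $$\mathfrak B\cap\mathcal O_k=\{\beta_{K,I,J}: K,I,J \text{ pairwise disjoint},\ |I|+|J|+2|K|=2l \text{ for some } 0\le l\le k\}.$$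
   Context: Let $\mathfrak h$ be a complex Hilbert space of finite dimension $n$ with a fixed orthonormal basis $\varphi_1,\dots,\varphi_n$, and let $\mathbb N_n=\{1,\dots,n\}$. Inner products are antilinear in the first argument. $\mathcal F=\bigoplus_{k=0}^n\bigwedge^k\mathfrak h$ is the fermion Fock space, with inner product $\langle f_1\wedge\cdots\wedge f_k,g_1\wedge\cdots\wedge g_l\rangle=\delta_{kl}\det(\langle f_i,g_j\rangle)_{i,j}$. Its vacuum $\Omega$ is $1\in\bigwedge^0\mathfrak h=\mathbb C$. The creation operators are $c^*(f)\omega=f\wedge\omega$, and $c(f)=c^*(f)^*$. For $A=\{a_1<\dots<a_k\}\subseteq\mathbb N_n$ put $\varphi_A=\varphi_{a_1}\wedge\cdots\wedge\varphi_{a_k}$, with $\varphi_\emptyset=\Omega$. Put - $\mathbf c^*_A=c^*(\varphi_{a_1})\cdots c^*(\varphi_{a_k})$, so that $\mathbf c^*_A\omega=\varphi_A\wedge\omega$; - $\mathbf c_A=(\mathbf c^*_A)^*=c(\varphi_{a_k})\cdots c(\varphi_{a_1})$; - $\mathbf c_{A,B}=\mathbf c^*_A\mathbf c_B$; - $\mathbf n_A=\mathbf c_{A,A}$. Empty products are the identity. For $K\subseteq\mathbb N_n$ define $b_K=\sum_{I\subseteq K}(-2)^{|I|}\mathbf n_I$. $\mathcal L^2(\mathcal F)$ is the space of all linear operators on $\mathcal F$ with inner product $\langle a,b\rangle=\operatorname{tr}(a^*b)$. For $\omega\in\mathcal F$ let $\mathbf c^*(\omega)\xi=\omega\wedge\xi$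 and $\mathbf c(\omega)=\mathbf c^*(\omega)^*$. For $k\in\mathbb N_0$, the space $\mathcal O_k$ of $k$-body operators is the complex linear span of all operators $\mathbf c^*(\omega)\mathbf c(\eta)$ with $\omega\in\bigwedge^r\mathfrak h$, $\eta\in\bigwedge^s\mathfrak h$, and $r+s=2l$ for some $0\le l\le k$. *)

theory Defs
  imports Complex_Main
begin

text \<open>Coordinate model of the fermion Fock space over an n-dimensional Hilbert space h with
orthonormal basis phi_1..phi_n: a vector of F is given by its coefficients w.r.t. the
orthonormal basis phi_A (A a subset of {1..n}), i.e. a function nat set => complex supported
on subsets of {1..n}.  Linear operators on F are given by their matrices w.r.t. this basis,
i.e. functions nat set => nat set => complex supported on Pow {1..n} x Pow {1..n}.\<close>

type_synonym fvec = "nat set \<Rightarrow> complex"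
type_synonym fop = "nat set \<Rightarrow> nat set \<Rightarrow> complex"

definition NN :: "nat \<Rightarrow> nat set" where
  "NN n = {1..n}"

text \<open>Sign with phi_A wedge phi_B = wsign A B * phi_(A Un B) for disjoint A, B.\<close>
definition wsign :: "nat set \<Rightarrow> nat set \<Rightarrow> complex" where
  "wsign A B = (-1) ^ card {(x, y). x \<in> A \<and> y \<in> B \<and> y < x}"

definition fock :: "nat \<Rightarrow> fvec set" where
  "fock n = {v. \<forall>A. v A \<noteq> 0 \<longrightarrow> A \<subseteq> NN n}"

text \<open>The k-th exterior power of h inside F (so h itself is wedge_k n 1).\<close>
definition wedge_k :: "nat \<Rightarrow> nat \<Rightarrow> fvec set" where
  "wedge_k n k = {v. \<forall>A. v A \<noteq> 0 \<longrightarrow> A \<subseteq> NN n \<and> card A = k}"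

definition basis_vec :: "nat set \<Rightarrow> fvec" where
  "basis_vec A = (\<lambda>B. if B = A then 1 else 0)"

text \<open>Matrix of c*(omega): xi |-> omega wedge xi.\<close>
definition cre :: "nat \<Rightarrow> fvec \<Rightarrow> fop" where
  "cre n \<omega> = (\<lambda>C B. if C \<subseteq> NN n \<and> B \<subseteq> C then wsign (C - B) B * \<omega> (C - B) else 0)"

definition adj :: "fop \<Rightarrow> fop" where
  "adj a = (\<lambda>A B. cnj (a B A))"

definition mmul :: "nat \<Rightarrow> fop \<Rightarrow> fop \<Rightarrow> fop" where
  "mmul n a b = (\<lambda>A C. \<Sum>B\<in>Pow (NN n). a A B * b B C)"

definition idop :: "nat \<Rightarrow> fop" where
  "idop n = (\<lambda>A B. if A = B \<and> A \<subseteq> NN n then 1 else 0)"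

definition cre1 :: "nat \<Rightarrow> nat \<Rightarrow> fop" where
  "cre1 n a = cre n (basis_vec {a})"

definition bcre :: "nat \<Rightarrow> nat set \<Rightarrow> fop" where
  "bcre n A = foldr (mmul n) (map (cre1 n) (sorted_list_of_set A)) (idop n)"

definition bann :: "nat \<Rightarrow> nat set \<Rightarrow> fop" where
  "bann n A = adj (bcre n A)"

definition bcc :: "nat \<Rightarrow> nat set \<Rightarrow> nat set \<Rightarrow> fop" where
  "bcc n A B = mmul n (bcre n A) (bann n B)"

definition bnum :: "nat \<Rightarrow> nat set \<Rightarrow> fop" where
  "bnum n A = bcc n A A"

definition bK :: "nat \<Rightarrow> nat set \<Rightarrow> fop" where
  "bK n K = (\<lambda>X Y. \<Sum>I\<in>Pow K. (-2) ^ card I * bnum n I X Y)"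

definition beta :: "nat \<Rightarrow> nat set \<Rightarrow> nat set \<Rightarrow> nat set \<Rightarrow> fop" where
  "beta n K I J = (\<lambda>X Y. complex_of_real (1 / sqrt (2 ^ (n - card (I \<union> J))))
                         * mmul n (bK n K) (bcc n I J) X Y)"

text \<open>Hilbert-Schmidt inner product tr(a* b).\<close>
definition hs_inner :: "nat \<Rightarrow> fop \<Rightarrow> fop \<Rightarrow> complex" where
  "hs_inner n a b = (\<Sum>A\<in>Pow (NN n). \<Sum>B\<in>Pow (NN n). cnj (a A B) * b A B)"

text \<open>L^2(F): all linear operators on F.\<close>
definition Lop :: "nat \<Rightarrow> fop set" where
  "Lop n = {a. \<forall>A B. a A B \<noteq> 0 \<longrightarrow> A \<subseteq> NN n \<and> B \<subseteq> NN n}"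

definition cspan :: "fop set \<Rightarrow> fop set" where
  "cspan S = {x. \<exists>F c. finite F \<and> F \<subseteq> S \<and> (\<forall>A B. x A B = (\<Sum>y\<in>F. c y * y A B))}"

definition kbody :: "nat \<Rightarrow> nat \<Rightarrow> fop set" where
  "kbody n k = cspan {mmul n (cre n \<omega>) (adj (cre n \<eta>)) | \<omega> \<eta> r s l.
       \<omega> \<in> wedge_k n r \<and> \<eta> \<in> wedge_k n s \<and> r + s = 2 * l \<and> l \<le> k}"

definition is_onb :: "nat \<Rightarrow> fop set \<Rightarrow> fop set \<Rightarrow> bool" where
  "is_onb n S V \<longleftrightarrow> S \<subseteq> V \<and> (\<forall>x\<in>S. hs_inner n x x = 1)
     \<and> (\<forall>x\<in>S. \<forall>y\<in>S. x \<noteq> y \<longrightarrow> hs_inner n x y = 0) \<and> cspan S = V"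

definition pdisj :: "nat set \<Rightarrow> nat set \<Rightarrow> nat set \<Rightarrow> bool" where
  "pdisj K I J \<longleftrightarrow> K \<inter> I = {} \<and> K \<inter> J = {} \<and> I \<inter> J = {}"

definition frakB :: "nat \<Rightarrow> fop set" where
  "frakB n = {beta n K I J | K I J. K \<subseteq> NN n \<and> I \<subseteq> NN n \<and> J \<subseteq> NN n \<and> pdisj K I J}"

end

theory Submission
  imports Defs
begin

text \<open>
  In the matrix picture, \<open>c\<^sub>I\<^sub>,\<^sub>J\<close> (for disjoint \<open>I\<close>, \<open>J\<close>) is a signed partial permutation
  matrix with entries \<open>\<plusminus>1\<close> exactly at the pairs \<open>(I \<union> Z, J \<union> Z)\<close>, \<open>Z\<close> disjoint from
  \<open>I \<union> J\<close>, and since each \<open>1 - 2n\<^sub>k\<close> is \<open>\<plusminus>1\<close> on basis vectors, \<open>b\<^sub>K\<close> is the diagonal matrix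
  of the Walsh character \<open>X \<mapsto> (-1)\<^bsup>|K \<inter> X|\<^esup>\<close>. So for fixed \<open>I\<close>, \<open>J\<close> the operators
  \<open>b\<^sub>K c\<^sub>I\<^sub>,\<^sub>J\<close> with \<open>K \<subseteq> \<nat>\<^sub>n - (I \<union> J)\<close> are the Walsh-Fourier basis of the matrices
  supported on that pattern: character orthogonality gives the inner products, and Fourier
  inversion writes every matrix unit in terms of them.

  For \<open>O\<^sub>k\<close>, \<open>c\<^sup>*(\<omega>) c(\<eta>)\<close> expands into operators \<open>c\<^sub>P\<^sub>,\<^sub>Q\<close> with \<open>|P| + |Q| = 2l\<close>,
  \<open>l \<le> k\<close>, and \<open>c\<^sub>A\<^sub>\<union>\<^sub>I\<^sub>,\<^sub>A\<^sub>\<union>\<^sub>J = \<plusminus>n\<^sub>A c\<^sub>I\<^sub>,\<^sub>J\<close>. The two triangular relations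
  \<open>b\<^sub>K = \<Sum>\<^sub>A\<^sub>\<subseteq>\<^sub>K (-2)\<^bsup>|A|\<^esup> n\<^sub>A\<close> and \<open>n\<^sub>A = 2\<^bsup>-|A|\<^esup> \<Sum>\<^sub>K\<^sub>\<subseteq>\<^sub>A (-1)\<^bsup>|K|\<^esup> b\<^sub>K\<close> preserve the
  degree \<open>|I| + |J| + 2|K|\<close>, so the \<open>\<beta>\<^sub>K\<^sub>,\<^sub>I\<^sub>,\<^sub>J\<close> of degree at most \<open>2k\<close> span \<open>O\<^sub>k\<close>; by
  orthonormality no other element of the basis lies in their span.
\<close>

lemma finite_NN [simp]: "finite (NN n)"
  by (simp add: NN_def)

lemma card_NN [simp]: "card (NN n) = n"
  by (simp add: NN_def)

lemma finite_subset_NN: "A \<subseteq> NN n \<Longrightarrow> finite A"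
  using finite_subset finite_NN by blast

lemma finite_inversions: "finite A \<Longrightarrow> finite {(x, y). x \<in> A \<and> y \<in> B \<and> y < (x::nat)}"
  by (rule finite_subset[of _ "A \<times> (\<Union>x\<in>A. {..<x})"]) auto

lemma wsign_Un_left:
  assumes "finite A1" "finite A2" "A1 \<inter> A2 = {}"
  shows "wsign (A1 \<union> A2) B = wsign A1 B * wsign A2 B"
proof -
  have split: "{(x, y). x \<in> A1 \<union> A2 \<and> y \<in> B \<and> y < x} =
     {(x, y). x \<in> A1 \<and> y \<in> B \<and> y < x} \<union> {(x, y). x \<in> A2 \<and> y \<in> B \<and> y < x}" by auto
  show ?thesis unfolding wsign_def split
    by (subst card_Un_disjoint) (use assms finite_inversions in \<open>auto simp: power_add\<close>)
qed

lemma wsign_Un_right: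
  assumes "finite A" "B1 \<inter> B2 = {}"
  shows "wsign A (B1 \<union> B2) = wsign A B1 * wsign A B2"
proof -
  have split: "{(x, y). x \<in> A \<and> y \<in> B1 \<union> B2 \<and> y < x} =
     {(x, y). x \<in> A \<and> y \<in> B1 \<and> y < x} \<union> {(x, y). x \<in> A \<and> y \<in> B2 \<and> y < x}" by auto
  show ?thesis unfolding wsign_def split
    by (subst card_Un_disjoint) (use assms finite_inversions in \<open>auto simp: power_add\<close>)
qed

lemma wsign_mult_self [simp]: "wsign A B * wsign A B = 1"
  unfolding wsign_def by (simp flip: power_add)

lemma wsign_mult_self_left [simp]: "wsign A B * (wsign A B * c) = c"
  by (simp flip: mult.assoc)

lemma cnj_wsign [simp]: "cnj (wsign A B) = wsign A B"
  unfolding wsign_def by simp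

lemma wsign_empty_left [simp]: "wsign {} B = 1"
  unfolding wsign_def by simp

lemma wsign_singleton_below: "(\<And>y. y \<in> B \<Longrightarrow> a < y) \<Longrightarrow> wsign {a} B = 1"
proof -
  assume "\<And>y. y \<in> B \<Longrightarrow> a < y"
  then have none: "{(x, y). x \<in> {a} \<and> y \<in> B \<and> y < x} = {}" by fastforce
  show ?thesis unfolding wsign_def none by simp
qed

section \<open>Matrix elements of the creation and annihilation monomials\<close>

lemma sum_delta_mult:
  fixes c f :: "'a \<Rightarrow> 'b::semiring_0"
  shows "finite S \<Longrightarrow> (\<Sum>Z\<in>S. (if P \<and> Z = z then c Z else 0) * f Z) = (if P \<and> z \<in> S then c z * f z else 0)"
proof -
  assume "finite S"
  have "(\<Sum>Z\<in>S. (if P \<and> Z = z then c Z else 0) * f Z) = (\<Sum>Z\<in>S. if Z = z then (if P then c z * f z else 0) else 0)"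
    by (rule sum.cong) auto
  then show ?thesis using \<open>finite S\<close> by (simp add: sum.delta')
qed

lemma cre_basis_vec:
  "cre n (basis_vec P) X Z = (if X \<subseteq> NN n \<and> P \<subseteq> X \<and> Z = X - P then wsign P Z else 0)"
proof -
  have "(X \<subseteq> NN n \<and> Z \<subseteq> X \<and> X - Z = P) \<longleftrightarrow> (X \<subseteq> NN n \<and> P \<subseteq> X \<and> Z = X - P)" by blast
  then show ?thesis unfolding cre_def basis_vec_def by (auto simp: Diff_Diff_Int Int_absorb1)
qed

lemma foldr_cre1_eq_cre:
  assumes "sorted_wrt (<) xs"
  shows "foldr (mmul n) (map (cre1 n) xs) (idop n) = cre n (basis_vec (set xs))"
  using assms
proof (induction xs)
  case Nil
  show ?case by (intro ext) (auto simp: idop_def cre_basis_vec)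
next
  case (Cons a xs)
  define A where "A = set xs"
  have above: "\<And>y. y \<in> A \<Longrightarrow> a < y" and "a \<notin> A"
    using Cons.prems by (auto simp: A_def)
  have IH: "foldr (mmul n) (map (cre1 n) xs) (idop n) = cre n (basis_vec A)"
    using Cons by (simp add: A_def)
  show ?case
  proof (intro ext)
    fix X Y
    have "foldr (mmul n) (map (cre1 n) (a # xs)) (idop n) X Y
       = (\<Sum>Z\<in>Pow (NN n). (if (X \<subseteq> NN n \<and> a \<in> X) \<and> Z = X - {a} then wsign {a} Z else 0)
            * cre n (basis_vec A) Z Y)"
      by (simp add: IH mmul_def cre1_def cre_basis_vec conj_assoc)
    also have "\<dots> = (if X \<subseteq> NN n \<and> a \<in> X then wsign {a} (X - {a}) * cre n (basis_vec A) (X - {a}) Y else 0)"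
      by (subst sum_delta_mult) auto
    also have "\<dots> = cre n (basis_vec (insert a A)) X Y"
    proof (cases "X \<subseteq> NN n \<and> insert a A \<subseteq> X \<and> Y = X - insert a A")
      case True
      then have fin: "finite A" and XaAY: "X - {a} = A \<union> Y" and "A \<inter> Y = {}"
        using \<open>a \<notin> A\<close> by (auto intro: finite_subset_NN simp: A_def)
      have "wsign {a} (X - {a}) = wsign {a} Y"
        unfolding XaAY using fin \<open>A \<inter> Y = {}\<close> wsign_singleton_below[OF above]
        by (simp add: wsign_Un_right)
      moreover have "wsign (insert a A) Y = wsign {a} Y * wsign A Y"
        using wsign_Un_left[of "{a}" A Y] fin \<open>a \<notin> A\<close> by simp
      ultimately show ?thesis using True \<open>a \<notin> A\<close> by (auto simp: cre_basis_vec Diff_insert2[symmetric])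
    next
      case False
      then show ?thesis using \<open>a \<notin> A\<close> by (auto simp: cre_basis_vec)
    qed
    finally show "foldr (mmul n) (map (cre1 n) (a # xs)) (idop n) X Y = cre n (basis_vec (set (a # xs))) X Y"
      by (simp add: A_def)
  qed
qed

lemma bcre_eq_cre: "finite A \<Longrightarrow> bcre n A = cre n (basis_vec A)"
  unfolding bcre_def by (simp add: foldr_cre1_eq_cre)

lemma cnj_cre_basis_vec: "cnj (cre n (basis_vec P) X Z) = cre n (basis_vec P) X Z"
  by (simp add: cre_basis_vec)

lemma bcc_apply:
  assumes "finite P" "finite Q"
  shows "bcc n P Q X Y = (if X \<subseteq> NN n \<and> Y \<subseteq> NN n \<and> P \<subseteq> X \<and> Q \<subseteq> Y \<and> X - P = Y - Q
                          then wsign P (X - P) * wsign Q (Y - Q) else 0)"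
  (is "_ = ?rhs")
proof -
  have "bcc n P Q X Y = (\<Sum>Z\<in>Pow (NN n). (if (X \<subseteq> NN n \<and> P \<subseteq> X) \<and> Z = X - P then wsign P Z else 0)
          * (if Y \<subseteq> NN n \<and> Q \<subseteq> Y \<and> Z = Y - Q then wsign Q Z else 0))"
    using assms by (simp add: bcc_def bann_def mmul_def adj_def bcre_eq_cre cnj_cre_basis_vec)
      (simp add: cre_basis_vec conj_assoc)
  also have "\<dots> = ?rhs"
    by (subst sum_delta_mult) auto
  finally show ?thesis .
qed

lemma bcc_apply_disjoint:
  assumes "finite P" "finite Q" "P \<inter> Q = {}"
  shows "bcc n P Q X Y = (if X \<subseteq> NN n \<and> Y \<subseteq> NN n \<and> X - Y = P \<and> Y - X = Q
                          then wsign P (X \<inter> Y) * wsign Q (X \<inter> Y) else 0)"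
proof -
  have "(P \<subseteq> X \<and> Q \<subseteq> Y \<and> X - P = Y - Q) \<longleftrightarrow> (X - Y = P \<and> Y - X = Q)"
    using assms(3) by blast
  moreover have "X - P = X \<inter> Y" "Y - Q = X \<inter> Y" if "X - Y = P" "Y - X = Q"
    using that by blast+
  ultimately show ?thesis by (auto simp: bcc_apply[OF assms(1,2)])
qed

section \<open>Walsh characters and \<open>b\<^sub>K\<close>\<close>

definition walsh :: "nat set \<Rightarrow> nat set \<Rightarrow> complex" where
  "walsh K X = (-1) ^ card (K \<inter> X)"

lemma cnj_walsh [simp]: "cnj (walsh K X) = walsh K X"
  by (simp add: walsh_def)

lemma walsh_eq_prod: "finite K \<Longrightarrow> walsh K X = (\<Prod>a\<in>K. if a \<in> X then -1 else 1)"
  by (simp add: walsh_def prod.If_cases)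

lemma sum_Pow_prod:
  fixes g :: "'a \<Rightarrow> 'b::comm_semiring_1"
  shows "finite M \<Longrightarrow> (\<Sum>Z\<in>Pow M. \<Prod>a\<in>Z. g a) = (\<Prod>a\<in>M. g a + 1)"
  by (simp add: prod_add)

lemma sum_walsh_mult:
  assumes "finite M"
  shows "(\<Sum>K\<in>Pow M. walsh K U * walsh K V) = (if U \<inter> M = V \<inter> M then 2 ^ card M else 0)"
proof -
  define h where "h a = (if a \<in> U then -1 else 1) * (if a \<in> V then -1 else (1::complex))" for a
  have "(\<Sum>K\<in>Pow M. walsh K U * walsh K V) = (\<Sum>K\<in>Pow M. \<Prod>a\<in>K. h a)"
    using assms by (intro sum.cong refl)
      (simp add: walsh_eq_prod h_def prod.distrib finite_subset[of _ M])
  also have "\<dots> = (\<Prod>a\<in>M. if a \<in> U \<longleftrightarrow> a \<in> V then 2 else 0)"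
    using assms by (simp add: sum_Pow_prod h_def) (intro prod.cong refl, auto)
  also have "\<dots> = (if U \<inter> M = V \<inter> M then 2 ^ card M else 0)"
  proof (cases "U \<inter> M = V \<inter> M")
    case True
    then have "(\<Prod>a\<in>M. if a \<in> U \<longleftrightarrow> a \<in> V then 2 else 0) = (\<Prod>a\<in>M. (2::complex))"
      by (intro prod.cong) auto
    with True show ?thesis by simp
  qed (use assms in \<open>auto simp: prod_zero_iff\<close>)
  finally show ?thesis .
qed

lemma sum_Pow_neg_two_pow: "finite S \<Longrightarrow> (\<Sum>I\<in>Pow S. (-2::'a::comm_ring_1) ^ card I) = (-1) ^ card S"
  using sum_Pow_prod[of S "\<lambda>_. -2 :: 'a"] by simp

lemma walsh_eq_sum_subsets:
  assumes "finite K"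
  shows "walsh K X = (\<Sum>A\<in>Pow K. if A \<subseteq> X then (-2) ^ card A else 0)"
proof -
  have "(\<Sum>A\<in>Pow K. if A \<subseteq> X then (-2) ^ card A else 0) = (\<Sum>A\<in>{A \<in> Pow K. A \<subseteq> X}. (-2::complex) ^ card A)"
    using assms by (intro sum.inter_filter[symmetric]) simp
  also have "{A \<in> Pow K. A \<subseteq> X} = Pow (K \<inter> X)"
    by auto
  finally show ?thesis
    using assms by (simp add: walsh_def sum_Pow_neg_two_pow del: Pow_Int_eq)
qed

lemma sum_walsh_subset_indicator:
  assumes "finite A"
  shows "(\<Sum>K\<in>Pow A. (-1) ^ card K * walsh K X) = (if A \<subseteq> X then 2 ^ card A else 0)"
proof -
  have "(-1) ^ card K = walsh K A" if "K \<subseteq> A" for K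
    using that by (simp add: walsh_def Int_absorb2)
  then have "(\<Sum>K\<in>Pow A. (-1) ^ card K * walsh K X) = (\<Sum>K\<in>Pow A. walsh K A * walsh K X)"
    by (intro sum.cong) auto
  then show ?thesis
    using assms by (auto simp: sum_walsh_mult)
qed

lemma bnum_apply: "finite I \<Longrightarrow> bnum n I X Y = (if X = Y \<and> X \<subseteq> NN n \<and> I \<subseteq> X then 1 else 0)"
  unfolding bnum_def by (auto simp: bcc_apply Diff_partition)

lemma bK_apply: assumes "finite K" shows "bK n K X Y = (if X = Y \<and> X \<subseteq> NN n then walsh K X else 0)"
proof (cases "X = Y \<and> X \<subseteq> NN n")
  case True
  then show ?thesis using assms
    by (auto simp: bK_def walsh_eq_sum_subsets bnum_apply finite_subset intro!: sum.cong)
next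
  case False
  then have "bnum n I X Y = 0" if "I \<in> Pow K" for I
    using assms that by (auto simp: bnum_apply finite_subset)
  with False show ?thesis
    by (auto simp: bK_def)
qed

lemma mmul_bK_apply:
  "finite K \<Longrightarrow> mmul n (bK n K) b X Y = (if X \<subseteq> NN n then walsh K X * b X Y else 0)"
  by (simp add: mmul_def bK_apply if_distrib[of "\<lambda>u. u * _"] sum.delta cong: if_cong)

lemma bK_bcc_apply:
  "finite K \<Longrightarrow> finite P \<Longrightarrow> finite Q \<Longrightarrow> mmul n (bK n K) (bcc n P Q) X Y = walsh K X * bcc n P Q X Y"
  by (simp add: mmul_bK_apply bcc_apply)

section \<open>Orthonormality\<close>

lemma sum_Pow_pairs_by_differences:
  fixes g :: "'a set \<Rightarrow> 'a set \<Rightarrow> 'b::comm_monoid_add"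
  assumes "finite N" "A \<union> B \<subseteq> N" "A \<inter> B = {}"
  shows "(\<Sum>X\<in>Pow N. \<Sum>Y\<in>Pow N. if X - Y = A \<and> Y - X = B then g X Y else 0)
       = (\<Sum>Z\<in>Pow (N - (A \<union> B)). g (A \<union> Z) (B \<union> Z))"
proof -
  let ?pair = "\<lambda>Z. (A \<union> Z, B \<union> Z)"
  have "(\<Sum>X\<in>Pow N. \<Sum>Y\<in>Pow N. if X - Y = A \<and> Y - X = B then g X Y else 0)
      = (\<Sum>p\<in>Pow N \<times> Pow N. if fst p - snd p = A \<and> snd p - fst p = B then g (fst p) (snd p) else 0)"
    by (simp add: sum.cartesian_product case_prod_beta)
  also have "\<dots> = (\<Sum>p\<in>{p \<in> Pow N \<times> Pow N. fst p - snd p = A \<and> snd p - fst p = B}. g (fst p) (snd p))"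
    using assms(1) by (intro sum.inter_filter[symmetric]) simp
  also have "{p \<in> Pow N \<times> Pow N. fst p - snd p = A \<and> snd p - fst p = B} = ?pair ` Pow (N - (A \<union> B))"
  proof (intro equalityI subsetI)
    fix p assume "p \<in> {p \<in> Pow N \<times> Pow N. fst p - snd p = A \<and> snd p - fst p = B}"
    then have "p = ?pair (fst p \<inter> snd p)" "fst p \<inter> snd p \<in> Pow (N - (A \<union> B))"
      by (auto simp: prod_eq_iff)
    then show "p \<in> ?pair ` Pow (N - (A \<union> B))" by blast
  qed (use assms in auto)
  also have "inj_on ?pair (Pow (N - (A \<union> B)))"
    by (rule inj_onI) auto
  then have "(\<Sum>p\<in>?pair ` Pow (N - (A \<union> B)). g (fst p) (snd p)) = (\<Sum>Z\<in>Pow (N - (A \<union> B)). g (A \<union> Z) (B \<union> Z))"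
    by (simp add: sum.reindex)
  finally show ?thesis .
qed

lemma hs_inner_bK_bcc:
  assumes sub: "K \<subseteq> NN n" "A \<subseteq> NN n" "B \<subseteq> NN n" "L \<subseteq> NN n" "C \<subseteq> NN n" "D \<subseteq> NN n"
    and disj: "pdisj K A B" "pdisj L C D"
  shows "hs_inner n (mmul n (bK n K) (bcc n A B)) (mmul n (bK n L) (bcc n C D))
       = (if A = C \<and> B = D \<and> K = L then 2 ^ (n - card (A \<union> B)) else 0)"
proof -
  have fin: "finite K" "finite A" "finite B" "finite L" "finite C" "finite D"
    using sub by (auto intro: finite_subset_NN)
  have terms: "cnj (mmul n (bK n K) (bcc n A B) X Y) * mmul n (bK n L) (bcc n C D) X Y
      = (if A = C \<and> B = D then if X - Y = A \<and> Y - X = B then walsh K X * walsh L X else 0 else 0)"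
    if "X \<subseteq> NN n" "Y \<subseteq> NN n" for X Y
    using that disj fin by (auto simp: pdisj_def bK_bcc_apply bcc_apply_disjoint mult_ac)
  show ?thesis
  proof (cases "A = C \<and> B = D")
    case True
    then have [simp]: "C = A" "D = B" by auto
    define M where "M = NN n - (A \<union> B)"
    have "K \<subseteq> M" "L \<subseteq> M"
      using sub disj by (auto simp: M_def pdisj_def)
    have "hs_inner n (mmul n (bK n K) (bcc n A B)) (mmul n (bK n L) (bcc n C D))
        = (\<Sum>X\<in>Pow (NN n). \<Sum>Y\<in>Pow (NN n). if X - Y = A \<and> Y - X = B then walsh K X * walsh L X else 0)"
      unfolding hs_inner_def by (intro sum.cong refl) (use terms in simp)
    also have "\<dots> = (\<Sum>Z\<in>Pow M. walsh K (A \<union> Z) * walsh L (A \<union> Z))"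
      unfolding M_def using sub disj by (intro sum_Pow_pairs_by_differences) (auto simp: pdisj_def)
    also have "\<dots> = (\<Sum>Z\<in>Pow M. walsh Z K * walsh Z L)"
      using disj by (intro sum.cong refl) (simp add: walsh_def pdisj_def Int_Un_distrib Int_commute)
    also have "\<dots> = (if K = L then 2 ^ card M else 0)"
      using \<open>K \<subseteq> M\<close> \<open>L \<subseteq> M\<close> by (simp add: M_def sum_walsh_mult Int_absorb2)
    also have "card M = n - card (A \<union> B)"
      using sub by (simp add: M_def card_Diff_subset finite_subset_NN)
    finally show ?thesis
      by simp
  next
    case False
    then have "hs_inner n (mmul n (bK n K) (bcc n A B)) (mmul n (bK n L) (bcc n C D)) = 0"
      unfolding hs_inner_def by (intro sum.neutral ballI) (auto simp: terms)
    with False show ?thesis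
      by auto
  qed
qed

lemma hs_inner_scale:
  "hs_inner n (\<lambda>X Y. c * a X Y) (\<lambda>X Y. d * b X Y) = cnj c * d * hs_inner n a b"
  by (simp add: hs_inner_def sum_distrib_left mult_ac)

lemma hs_inner_beta:
  assumes "K \<subseteq> NN n" "A \<subseteq> NN n" "B \<subseteq> NN n" "L \<subseteq> NN n" "C \<subseteq> NN n" "D \<subseteq> NN n"
    and "pdisj K A B" "pdisj L C D"
  shows "hs_inner n (beta n K A B) (beta n L C D) = (if A = C \<and> B = D \<and> K = L then 1 else 0)"
proof -
  have "(1 / sqrt (2 ^ m)) * (1 / sqrt (2 ^ m)) * (2::real) ^ m = 1" for m
    by (simp add: field_simps)
  then have "cnj (complex_of_real (1 / sqrt (2 ^ m))) * complex_of_real (1 / sqrt (2 ^ m)) * 2 ^ m = 1" for m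
    by (metis complex_cnj_complex_of_real of_real_1 of_real_mult of_real_numeral of_real_power)
  then show ?thesis
    unfolding beta_def hs_inner_scale hs_inner_bK_bcc[OF assms] by simp
qed

lemma orthonormal_frakB:
  assumes "x \<in> frakB n" "y \<in> frakB n"
  shows "hs_inner n x y = (if x = y then 1 else 0)"
proof -
  obtain K A B where x: "x = beta n K A B" "K \<subseteq> NN n" "A \<subseteq> NN n" "B \<subseteq> NN n" "pdisj K A B"
    using assms(1) unfolding frakB_def by blast
  obtain L C D where y: "y = beta n L C D" "L \<subseteq> NN n" "C \<subseteq> NN n" "D \<subseteq> NN n" "pdisj L C D"
    using assms(2) unfolding frakB_def by blast
  have "hs_inner n x y = (if A = C \<and> B = D \<and> K = L then 1 else 0)"
    unfolding x(1) y(1) using x y by (intro hs_inner_beta) auto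
  moreover have "hs_inner n y y = 1"
    unfolding y(1) using y by (simp add: hs_inner_beta)
  ultimately show ?thesis
    using x(1) y(1) by (metis zero_neq_one)
qed

lemma mem_cspan_iff:
  "x \<in> cspan S \<longleftrightarrow> (\<exists>F c. finite F \<and> F \<subseteq> S \<and> x = (\<lambda>A B. \<Sum>y\<in>F. c y * y A B))"
  unfolding cspan_def by (auto simp: fun_eq_iff)

lemma cspan_zero: "(\<lambda>A B. 0) \<in> cspan S"
  unfolding mem_cspan_iff by (rule exI[of _ "{}"]) simp

lemma cspan_superset: "y \<in> S \<Longrightarrow> y \<in> cspan S"
  unfolding mem_cspan_iff by (rule exI[of _ "{y}"], rule exI[of _ "\<lambda>_. 1"]) simp

lemma cspan_add:
  assumes "x \<in> cspan S" "z \<in> cspan S"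
  shows "(\<lambda>A B. x A B + z A B) \<in> cspan S"
proof -
  obtain F1 c1 where F1: "finite F1" "F1 \<subseteq> S" "x = (\<lambda>A B. \<Sum>y\<in>F1. c1 y * y A B)"
    using assms(1) unfolding mem_cspan_iff by blast
  obtain F2 c2 where F2: "finite F2" "F2 \<subseteq> S" "z = (\<lambda>A B. \<Sum>y\<in>F2. c2 y * y A B)"
    using assms(2) unfolding mem_cspan_iff by blast
  define c where "c y = (if y \<in> F1 then c1 y else 0) + (if y \<in> F2 then c2 y else 0)" for y
  have "(\<Sum>y\<in>F1 \<union> F2. (if y \<in> F1 then c1 y else 0) * y A B) = x A B"
       "(\<Sum>y\<in>F1 \<union> F2. (if y \<in> F2 then c2 y else 0) * y A B) = z A B" for A B
    unfolding F1(3) F2(3) using F1(1) F2(1) by (intro sum.mono_neutral_cong_right; auto)+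
  then have "x A B + z A B = (\<Sum>y\<in>F1 \<union> F2. c y * y A B)" for A B
    by (simp add: c_def distrib_right sum.distrib)
  then show ?thesis
    unfolding mem_cspan_iff using F1 F2 by (intro exI[of _ "F1 \<union> F2"] exI[of _ c]) auto
qed

lemma cspan_scale:
  assumes "x \<in> cspan S"
  shows "(\<lambda>A B. d * x A B) \<in> cspan S"
proof -
  obtain F c where F: "finite F" "F \<subseteq> S" "x = (\<lambda>A B. \<Sum>y\<in>F. c y * y A B)"
    using assms unfolding mem_cspan_iff by blast
  have "(\<lambda>A B. d * x A B) = (\<lambda>A B. \<Sum>y\<in>F. (d * c y) * y A B)"
    unfolding F(3) sum_distrib_left by (simp only: mult.assoc)
  with F show ?thesis
    unfolding mem_cspan_iff by (intro exI[of _ F] exI[of _ "\<lambda>y. d * c y"]) simp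
qed

lemma cspan_sum:
  assumes "finite I" "\<And>i. i \<in> I \<Longrightarrow> g i \<noteq> 0 \<Longrightarrow> f i \<in> cspan S"
  shows "(\<lambda>A B. \<Sum>i\<in>I. g i * f i A B) \<in> cspan S"
  using assms
proof (induction I rule: finite_induct)
  case empty
  then show ?case using cspan_zero by simp
next
  case (insert i I)
  have "(\<lambda>A B. g i * f i A B) \<in> cspan S"
    using insert.prems cspan_scale[of "f i" S "g i"] by (cases "g i = 0") (simp_all add: cspan_zero)
  with insert show ?case
    using cspan_add[of "\<lambda>A B. g i * f i A B" S "\<lambda>A B. \<Sum>i\<in>I. g i * f i A B"] by simp
qed

lemma cspan_subset_cspan:
  assumes "S \<subseteq> cspan U"
  shows "cspan S \<subseteq> cspan U"
proof
  fix x assume "x \<in> cspan S"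
  then obtain F c where F: "finite F" "F \<subseteq> S" "x = (\<lambda>A B. \<Sum>y\<in>F. c y * y A B)"
    unfolding mem_cspan_iff by blast
  have "(\<lambda>A B. \<Sum>y\<in>F. c y * y A B) \<in> cspan U"
    using F(1,2) assms by (intro cspan_sum) auto
  with F(3) show "x \<in> cspan U"
    by simp
qed

lemma cspan_subset_Lop:
  assumes "S \<subseteq> Lop n"
  shows "cspan S \<subseteq> Lop n"
proof
  fix x assume "x \<in> cspan S"
  then obtain F c where F: "finite F" "F \<subseteq> S" "x = (\<lambda>A B. \<Sum>y\<in>F. c y * y A B)"
    unfolding mem_cspan_iff by blast
  show "x \<in> Lop n" unfolding Lop_def mem_Collect_eq
  proof (intro allI impI)
    fix A B assume "x A B \<noteq> 0"
    then obtain y where "y \<in> F" "c y * y A B \<noteq> 0"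
      unfolding F(3) by (meson sum.not_neutral_contains_not_neutral)
    then have "y A B \<noteq> 0" "y \<in> Lop n"
      using F(2) assms by auto
    then show "A \<subseteq> NN n \<and> B \<subseteq> NN n"
      unfolding Lop_def by blast
  qed
qed

lemma hs_inner_sum_right:
  "hs_inner n z (\<lambda>A B. \<Sum>y\<in>F. c y * y A B) = (\<Sum>y\<in>F. c y * hs_inner n z y)"
proof -
  have "hs_inner n z (\<lambda>A B. \<Sum>y\<in>F. c y * y A B)
     = (\<Sum>X\<in>Pow (NN n). \<Sum>Y\<in>Pow (NN n). \<Sum>y\<in>F. c y * (cnj (z X Y) * y X Y))"
    unfolding hs_inner_def by (simp add: sum_distrib_left mult_ac)
  also have "\<dots> = (\<Sum>y\<in>F. \<Sum>X\<in>Pow (NN n). \<Sum>Y\<in>Pow (NN n). c y * (cnj (z X Y) * y X Y))"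
    by (subst sum.swap) (simp only: sum.swap[of _ "Pow (NN n)" F])
  finally show ?thesis
    unfolding hs_inner_def by (simp add: sum_distrib_left)
qed

lemma hs_inner_cspan_eq_0:
  assumes "x \<in> cspan S" "\<And>y. y \<in> S \<Longrightarrow> hs_inner n z y = 0"
  shows "hs_inner n z x = 0"
proof -
  obtain F c where F: "finite F" "F \<subseteq> S" "x = (\<lambda>A B. \<Sum>y\<in>F. c y * y A B)"
    using assms(1) unfolding mem_cspan_iff by blast
  show ?thesis
    unfolding F(3) hs_inner_sum_right using F(2) assms(2) by (simp add: subset_iff)
qed

section \<open>Completeness\<close>

lemma bK_bcc_in_cspan:
  assumes "beta n K I J \<in> S"
  shows "mmul n (bK n K) (bcc n I J) \<in> cspan S"
proof -
  define r where "r = sqrt (2 ^ (n - card (I \<union> J)))"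
  have "r \<noteq> 0"
    by (simp add: r_def)
  then have "mmul n (bK n K) (bcc n I J) = (\<lambda>X Y. complex_of_real r * beta n K I J X Y)"
    by (simp add: beta_def r_def[symmetric] mult.assoc[symmetric] flip: of_real_mult)
  with assms show ?thesis
    by (simp add: cspan_scale cspan_superset)
qed

lemma frakB_subset_Lop: "frakB n \<subseteq> Lop n"
proof
  fix x assume "x \<in> frakB n"
  then obtain K I J where x: "x = beta n K I J" "K \<subseteq> NN n" "I \<subseteq> NN n" "J \<subseteq> NN n"
    unfolding frakB_def by blast
  then have "finite K" "finite I" "finite J"
    by (auto intro: finite_subset_NN)
  with x(1) show "x \<in> Lop n"
    by (auto simp: Lop_def beta_def bK_bcc_apply bcc_apply split: if_splits)
qed

lemma matrix_unit_expansion: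
  assumes "X0 \<subseteq> NN n" "Y0 \<subseteq> NN n"
  defines "A \<equiv> X0 - Y0" and "B \<equiv> Y0 - X0" and "M \<equiv> NN n - ((X0 - Y0) \<union> (Y0 - X0))"
  shows "(if X = X0 \<and> Y = Y0 then 1 else 0) =
    (\<Sum>K\<in>Pow M. (walsh K (X0 \<inter> Y0) * bcc n A B X0 Y0 / 2 ^ card M) * mmul n (bK n K) (bcc n A B) X Y)"
proof -
  have fin: "finite A" "finite B" "finite M" and "A \<inter> B = {}"
    using assms(1,2) by (auto simp: A_def B_def M_def intro: finite_subset_NN)
  have bcc_X0_Y0: "bcc n A B X0 Y0 * bcc n A B X0 Y0 = 1"
    using assms(1,2) fin \<open>A \<inter> B = {}\<close> by (simp add: bcc_apply_disjoint A_def B_def mult_ac)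
  have "(\<Sum>K\<in>Pow M. (walsh K (X0 \<inter> Y0) * bcc n A B X0 Y0 / 2 ^ card M) * mmul n (bK n K) (bcc n A B) X Y)
      = bcc n A B X0 Y0 * bcc n A B X Y * (\<Sum>K\<in>Pow M. walsh K (X0 \<inter> Y0) * walsh K X) / 2 ^ card M"
    using fin by (simp add: bK_bcc_apply finite_subset sum_distrib_left sum_divide_distrib mult_ac)
  also have "\<dots> = bcc n A B X0 Y0 * bcc n A B X Y * (if X0 \<inter> Y0 \<inter> M = X \<inter> M then 1 else 0)"
    using fin by (simp add: sum_walsh_mult)
  also have "\<dots> = (if X = X0 \<and> Y = Y0 then 1 else 0)"
  proof (cases "X \<subseteq> NN n \<and> Y \<subseteq> NN n \<and> X - Y = A \<and> Y - X = B")
    case True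
    then have "X \<inter> M = X \<inter> Y" "X0 \<inter> Y0 \<inter> M = X0 \<inter> Y0"
      using assms(1,2) by (auto simp: A_def B_def M_def)
    moreover have "X0 \<inter> Y0 = X \<inter> Y \<longleftrightarrow> X = X0 \<and> Y = Y0"
      using True by (auto simp: A_def B_def)
    ultimately show ?thesis
      using bcc_X0_Y0 by auto
  next
    case False
    then have "bcc n A B X Y = 0"
      unfolding bcc_apply_disjoint[OF fin(1,2) \<open>A \<inter> B = {}\<close>] by (rule if_not_P)
    moreover have "\<not> (X = X0 \<and> Y = Y0)"
      using False assms(1,2) by (auto simp: A_def B_def)
    ultimately show ?thesis
      by simp
  qed
  finally show ?thesis ..
qed

lemma Lop_subset_cspan_frakB: "Lop n \<subseteq> cspan (frakB n)"
proof
  fix a assume a: "a \<in> Lop n"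
  define unit where "unit p = (\<lambda>X Y. if X = fst p \<and> Y = snd p then 1 else 0 :: complex)"
    for p :: "nat set \<times> nat set"
  have units: "unit p \<in> cspan (frakB n)" if p_mem: "p \<in> Pow (NN n) \<times> Pow (NN n)" for p
  proof -
    obtain X0 Y0 where p: "p = (X0, Y0)" "X0 \<subseteq> NN n" "Y0 \<subseteq> NN n"
      using p_mem by auto
    have "beta n K (X0 - Y0) (Y0 - X0) \<in> frakB n" if "K \<subseteq> NN n - ((X0 - Y0) \<union> (Y0 - X0))" for K
      unfolding frakB_def pdisj_def using that p by blast
    then show ?thesis
      unfolding p unit_def using matrix_unit_expansion[OF p(2,3)]
      by (simp only: fst_conv snd_conv) (intro cspan_sum bK_bcc_in_cspan; auto)
  qed
  have a_eq: "a = (\<lambda>X Y. \<Sum>p\<in>Pow (NN n) \<times> Pow (NN n). a (fst p) (snd p) * unit p X Y)"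
  proof (intro ext)
    fix X Y
    have "(\<Sum>p\<in>Pow (NN n) \<times> Pow (NN n). a (fst p) (snd p) * unit p X Y)
        = (\<Sum>p\<in>Pow (NN n) \<times> Pow (NN n). if p = (X, Y) then a X Y else 0)"
      by (intro sum.cong) (auto simp: unit_def)
    also have "\<dots> = a X Y"
      using a unfolding Lop_def by (auto simp: sum.delta')
    finally show "a X Y = (\<Sum>p\<in>Pow (NN n) \<times> Pow (NN n). a (fst p) (snd p) * unit p X Y)" ..
  qed
  have "(\<lambda>X Y. \<Sum>p\<in>Pow (NN n) \<times> Pow (NN n). a (fst p) (snd p) * unit p X Y) \<in> cspan (frakB n)"
    using units by (intro cspan_sum) simp_all
  with a_eq show "a \<in> cspan (frakB n)"
    by simp
qed

section \<open>\<open>k\<close>-body operators\<close>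

definition frakB_upto :: "nat \<Rightarrow> nat \<Rightarrow> fop set" where
  "frakB_upto n k = {beta n K I J | K I J. K \<subseteq> NN n \<and> I \<subseteq> NN n \<and> J \<subseteq> NN n \<and> pdisj K I J
      \<and> (\<exists>l\<le>k. card I + card J + 2 * card K = 2 * l)}"

lemma bcc_Un_common:
  assumes fin: "finite A" "finite I" "finite J" and disj: "A \<inter> I = {}" "A \<inter> J = {}"
  shows "bcc n (A \<union> I) (A \<union> J) X Y = wsign I A * wsign J A * (if A \<subseteq> X then bcc n I J X Y else 0)"
proof -
  have finU: "finite (A \<union> I)" "finite (A \<union> J)"
    using fin by simp_all
  have cond_iff: "(X \<subseteq> NN n \<and> Y \<subseteq> NN n \<and> A \<union> I \<subseteq> X \<and> A \<union> J \<subseteq> Y \<and> X - (A \<union> I) = Y - (A \<union> J))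
      \<longleftrightarrow> A \<subseteq> X \<and> (X \<subseteq> NN n \<and> Y \<subseteq> NN n \<and> I \<subseteq> X \<and> J \<subseteq> Y \<and> X - I = Y - J)"
    using disj by blast
  show ?thesis
  proof (cases "A \<subseteq> X \<and> (X \<subseteq> NN n \<and> Y \<subseteq> NN n \<and> I \<subseteq> X \<and> J \<subseteq> Y \<and> X - I = Y - J)")
    case True
    define W where "W = X - (A \<union> I)"
    have XI: "X - I = A \<union> W" and YJ: "Y - J = A \<union> W" and YAJ: "Y - (A \<union> J) = W" and "A \<inter> W = {}"
      using True disj by (auto simp: W_def)
    have "bcc n (A \<union> I) (A \<union> J) X Y = wsign (A \<union> I) W * wsign (A \<union> J) W"
      using cond_iff[THEN iffD2, OF True] by (simp add: bcc_apply[OF finU] W_def[symmetric] YAJ)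
    also have "\<dots> = wsign I W * wsign J W"
      using fin disj by (simp add: wsign_Un_left mult_ac)
    also have "\<dots> = wsign I A * wsign J A * (wsign I (A \<union> W) * wsign J (A \<union> W))"
      using fin \<open>A \<inter> W = {}\<close> by (simp add: wsign_Un_right mult_ac)
    also have "\<dots> = wsign I A * wsign J A * (if A \<subseteq> X then bcc n I J X Y else 0)"
      using True by (simp add: bcc_apply[OF fin(2,3)] XI YJ)
    finally show ?thesis .
  next
    case False
    then show ?thesis
      unfolding bcc_apply[OF finU] bcc_apply[OF fin(2,3)] cond_iff by auto
  qed
qed

lemma bK_bcc_eq_sum_bcc:
  assumes fin: "finite K" "finite I" "finite J" and disj: "K \<inter> I = {}" "K \<inter> J = {}"
  shows "mmul n (bK n K) (bcc n I J) =
    (\<lambda>X Y. \<Sum>A\<in>Pow K. ((-2) ^ card A * (wsign I A * wsign J A)) * bcc n (A \<union> I) (A \<union> J) X Y)"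
proof (intro ext)
  fix X Y
  have "mmul n (bK n K) (bcc n I J) X Y = (\<Sum>A\<in>Pow K. if A \<subseteq> X then (-2) ^ card A else 0) * bcc n I J X Y"
    using fin by (simp add: bK_bcc_apply walsh_eq_sum_subsets)
  also have "\<dots> = (\<Sum>A\<in>Pow K. (-2) ^ card A * (if A \<subseteq> X then bcc n I J X Y else 0))"
    unfolding sum_distrib_right by (intro sum.cong) auto
  also have "\<dots> = (\<Sum>A\<in>Pow K. ((-2) ^ card A * (wsign I A * wsign J A)) * bcc n (A \<union> I) (A \<union> J) X Y)"
  proof (intro sum.cong refl)
    fix A assume "A \<in> Pow K"
    then have "bcc n (A \<union> I) (A \<union> J) X Y = wsign I A * wsign J A * (if A \<subseteq> X then bcc n I J X Y else 0)"
      using fin disj by (intro bcc_Un_common) (auto simp: finite_subset)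
    then show "(-2) ^ card A * (if A \<subseteq> X then bcc n I J X Y else 0)
        = ((-2) ^ card A * (wsign I A * wsign J A)) * bcc n (A \<union> I) (A \<union> J) X Y"
      by (simp add: mult_ac)
  qed
  finally show "mmul n (bK n K) (bcc n I J) X Y =
      (\<Sum>A\<in>Pow K. ((-2) ^ card A * (wsign I A * wsign J A)) * bcc n (A \<union> I) (A \<union> J) X Y)" .
qed

lemma bcc_Un_eq_sum_bK_bcc:
  assumes fin: "finite A" "finite I" "finite J" and disj: "A \<inter> I = {}" "A \<inter> J = {}"
  shows "bcc n (A \<union> I) (A \<union> J) = (\<lambda>X Y. \<Sum>K\<in>Pow A.
    (wsign I A * wsign J A * (-1) ^ card K / 2 ^ card A) * mmul n (bK n K) (bcc n I J) X Y)"
proof (intro ext)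
  fix X Y
  have "(\<Sum>K\<in>Pow A. (wsign I A * wsign J A * (-1) ^ card K / 2 ^ card A) * mmul n (bK n K) (bcc n I J) X Y)
     = (wsign I A * wsign J A / 2 ^ card A) * (\<Sum>K\<in>Pow A. (-1) ^ card K * walsh K X) * bcc n I J X Y"
    using fin by (simp add: bK_bcc_apply finite_subset sum_distrib_left sum_distrib_right
        sum_divide_distrib mult_ac)
  also have "\<dots> = wsign I A * wsign J A * (if A \<subseteq> X then bcc n I J X Y else 0)"
    using fin by (simp add: sum_walsh_subset_indicator)
  also have "\<dots> = bcc n (A \<union> I) (A \<union> J) X Y"
    using fin disj by (simp add: bcc_Un_common)
  finally show "bcc n (A \<union> I) (A \<union> J) X Y = (\<Sum>K\<in>Pow A.
      (wsign I A * wsign J A * (-1) ^ card K / 2 ^ card A) * mmul n (bK n K) (bcc n I J) X Y)" ..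
qed

lemma bcc_in_kbody:
  assumes "P \<subseteq> NN n" "Q \<subseteq> NN n" "card P + card Q = 2 * l" "l \<le> k"
  shows "bcc n P Q \<in> kbody n k"
proof -
  have "bcc n P Q = mmul n (cre n (basis_vec P)) (adj (cre n (basis_vec Q)))"
    using assms(1,2) by (simp add: bcc_def bann_def bcre_eq_cre finite_subset_NN)
  moreover have "basis_vec P \<in> wedge_k n (card P)" "basis_vec Q \<in> wedge_k n (card Q)"
    using assms(1,2) by (auto simp: wedge_k_def basis_vec_def)
  ultimately show ?thesis
    unfolding kbody_def using assms(3,4) by (intro cspan_superset CollectI exI conjI) auto
qed

lemma frakB_upto_subset_kbody: "frakB_upto n k \<subseteq> kbody n k"
proof
  fix x assume "x \<in> frakB_upto n k"
  then obtain K I J l where x: "x = beta n K I J" "K \<subseteq> NN n" "I \<subseteq> NN n" "J \<subseteq> NN n"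
      "pdisj K I J" "l \<le> k" "card I + card J + 2 * card K = 2 * l"
    unfolding frakB_upto_def by blast
  have fin: "finite K" "finite I" "finite J"
    using x(2-4) by (auto intro: finite_subset_NN)
  have mem: "bcc n (A \<union> I) (A \<union> J) \<in> kbody n k" if "A \<in> Pow K" for A
  proof -
    have "finite A" "card A \<le> card K" "A \<inter> I = {}" "A \<inter> J = {}"
      using that fin x(5) by (auto simp: pdisj_def finite_subset card_mono)
    then have "card (A \<union> I) + card (A \<union> J) = 2 * (l - card K + card A)"
      using fin x(7) by (simp add: card_Un_disjoint)
    then show ?thesis
      using that x(2-4,6,7) \<open>card A \<le> card K\<close>
      by (intro bcc_in_kbody[where l = "l - card K + card A"]) auto
  qed
  have disj: "K \<inter> I = {}" "K \<inter> J = {}"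
    using x(5) by (auto simp: pdisj_def)
  have "mmul n (bK n K) (bcc n I J) \<in> kbody n k"
    unfolding bK_bcc_eq_sum_bcc[OF fin disj] kbody_def using fin mem by (intro cspan_sum) (auto simp: kbody_def)
  then show "x \<in> kbody n k"
    unfolding x(1) beta_def kbody_def by (rule cspan_scale)
qed

lemma bcc_in_cspan_frakB_upto:
  assumes "P \<subseteq> NN n" "Q \<subseteq> NN n" "card P + card Q = 2 * l" "l \<le> k"
  shows "bcc n P Q \<in> cspan (frakB_upto n k)"
proof -
  define A I J where "A = P \<inter> Q" and "I = P - Q" and "J = Q - P"
  have PQ: "P = A \<union> I" "Q = A \<union> J"
    by (auto simp: A_def I_def J_def)
  have sub: "A \<subseteq> NN n" "I \<subseteq> NN n" "J \<subseteq> NN n" and disj: "A \<inter> I = {}" "A \<inter> J = {}" "I \<inter> J = {}"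
    using assms(1,2) by (auto simp: A_def I_def J_def)
  then have fin: "finite A" "finite I" "finite J"
    by (auto intro: finite_subset_NN)
  have "beta n K I J \<in> frakB_upto n k" if "K \<in> Pow A" for K
  proof -
    have "card K \<le> card A"
      using that fin by (simp add: card_mono)
    moreover have "card P = card A + card I" "card Q = card A + card J"
      unfolding PQ using fin disj by (simp_all add: card_Un_disjoint)
    ultimately have "card I + card J + 2 * card K = 2 * (l - card A + card K)" "l - card A + card K \<le> k"
      using assms(3,4) by auto
    with that sub disj show ?thesis
      unfolding frakB_upto_def pdisj_def by blast
  qed
  then show ?thesis
    unfolding PQ bcc_Un_eq_sum_bK_bcc[OF fin disj(1,2)] using fin by (intro cspan_sum bK_bcc_in_cspan) auto
qed

lemma cre_eq_sum_basis: "cre n \<omega> X Z = (\<Sum>P\<in>Pow (NN n). \<omega> P * cre n (basis_vec P) X Z)"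
proof (cases "X \<subseteq> NN n \<and> Z \<subseteq> X")
  case True
  then have "(\<Sum>P\<in>Pow (NN n). \<omega> P * cre n (basis_vec P) X Z)
      = (\<Sum>P\<in>Pow (NN n). if P = X - Z then wsign (X - Z) Z * \<omega> (X - Z) else 0)"
    by (intro sum.cong) (auto simp: cre_def basis_vec_def)
  with True show ?thesis
    by (auto simp: cre_def)
next
  case False
  then show ?thesis
    by (auto simp: cre_def intro!: sum.neutral)
qed

lemma mmul_cre_adj_cre:
  "mmul n (cre n \<omega>) (adj (cre n \<eta>)) X Y =
     (\<Sum>P\<in>Pow (NN n). \<Sum>Q\<in>Pow (NN n). \<omega> P * cnj (\<eta> Q) * bcc n P Q X Y)"
proof -
  let ?N = "Pow (NN n)"
  have bcc_eq: "bcc n P Q X Y = (\<Sum>Z\<in>?N. cre n (basis_vec P) X Z * cre n (basis_vec Q) Y Z)"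
    if "P \<in> ?N" "Q \<in> ?N" for P Q
    using that by (simp add: bcc_def bann_def mmul_def adj_def bcre_eq_cre finite_subset cnj_cre_basis_vec)
  have "mmul n (cre n \<omega>) (adj (cre n \<eta>)) X Y
      = (\<Sum>Z\<in>?N. (\<Sum>P\<in>?N. \<omega> P * cre n (basis_vec P) X Z) * cnj (\<Sum>Q\<in>?N. \<eta> Q * cre n (basis_vec Q) Y Z))"
    unfolding mmul_def adj_def cre_eq_sum_basis[of n \<omega> X] cre_eq_sum_basis[of n \<eta> Y] ..
  also have "\<dots> = (\<Sum>Z\<in>?N. \<Sum>P\<in>?N. \<Sum>Q\<in>?N. \<omega> P * cnj (\<eta> Q) * (cre n (basis_vec P) X Z * cre n (basis_vec Q) Y Z))"
    by (simp add: cnj_cre_basis_vec sum_product mult_ac)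
  also have "\<dots> = (\<Sum>P\<in>?N. \<Sum>Z\<in>?N. \<Sum>Q\<in>?N. \<omega> P * cnj (\<eta> Q) * (cre n (basis_vec P) X Z * cre n (basis_vec Q) Y Z))"
    by (rule sum.swap)
  also have "\<dots> = (\<Sum>P\<in>?N. \<Sum>Q\<in>?N. \<Sum>Z\<in>?N. \<omega> P * cnj (\<eta> Q) * (cre n (basis_vec P) X Z * cre n (basis_vec Q) Y Z))"
    by (intro sum.cong refl sum.swap)
  also have "\<dots> = (\<Sum>P\<in>?N. \<Sum>Q\<in>?N. \<omega> P * cnj (\<eta> Q) * bcc n P Q X Y)"
    by (simp add: bcc_eq sum_distrib_left)
  finally show ?thesis .
qed

lemma kbody_subset_cspan_frakB_upto: "kbody n k \<subseteq> cspan (frakB_upto n k)"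
  unfolding kbody_def
proof (rule cspan_subset_cspan, safe)
  fix \<omega> \<eta> :: fvec and r s l
  assume \<omega>: "\<omega> \<in> wedge_k n r" and \<eta>: "\<eta> \<in> wedge_k n s" and deg: "r + s = 2 * l" "l \<le> k"
  have "bcc n P Q \<in> cspan (frakB_upto n k)"
    if "P \<in> Pow (NN n)" "Q \<in> Pow (NN n)" "\<omega> P * cnj (\<eta> Q) \<noteq> 0" for P Q
  proof -
    have "card P = r" "card Q = s"
      using that(3) \<omega> \<eta> by (auto simp: wedge_k_def)
    with that(1,2) deg show ?thesis
      by (intro bcc_in_cspan_frakB_upto) auto
  qed
  moreover have "mmul n (cre n \<omega>) (adj (cre n \<eta>)) = (\<lambda>X Y. \<Sum>p\<in>Pow (NN n) \<times> Pow (NN n).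
      (\<omega> (fst p) * cnj (\<eta> (snd p))) * bcc n (fst p) (snd p) X Y)"
    by (intro ext) (simp add: mmul_cre_adj_cre sum.cartesian_product case_prod_beta)
  ultimately show "mmul n (cre n \<omega>) (adj (cre n \<eta>)) \<in> cspan (frakB_upto n k)"
    by (auto intro!: cspan_sum)
qed

lemma frakB_upto_subset_frakB: "frakB_upto n k \<subseteq> frakB n"
  unfolding frakB_upto_def frakB_def by blast

lemma frakB_Int_kbody: "frakB n \<inter> kbody n k = frakB_upto n k"
proof (intro equalityI subsetI)
  fix x assume x_mem: "x \<in> frakB n \<inter> kbody n k"
  show "x \<in> frakB_upto n k"
  proof (rule ccontr)
    assume "x \<notin> frakB_upto n k"
    then have orth: "hs_inner n x y = 0" if "y \<in> frakB_upto n k" for y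
    proof -
      have "y \<in> frakB n" "x \<noteq> y"
        using that \<open>x \<notin> frakB_upto n k\<close> frakB_upto_subset_frakB by auto
      with x_mem show ?thesis
        by (simp add: orthonormal_frakB)
    qed
    have "x \<in> cspan (frakB_upto n k)"
      using x_mem kbody_subset_cspan_frakB_upto[of n k] by (simp add: subset_iff)
    then have "hs_inner n x x = 0"
      using orth by (rule hs_inner_cspan_eq_0)
    with x_mem show False
      by (simp add: orthonormal_frakB)
  qed
next
  fix x assume "x \<in> frakB_upto n k"
  then show "x \<in> frakB n \<inter> kbody n k"
    using frakB_upto_subset_frakB[of n k] frakB_upto_subset_kbody[of n k] by (simp add: subset_iff)
qed

lemma is_onb_subset_frakB:
  assumes "S \<subseteq> frakB n" "cspan S = V"
  shows "is_onb n S V"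
proof -
  have "S \<subseteq> V"
    using assms(2) cspan_superset by blast
  with assms(1) show ?thesis
    unfolding is_onb_def by (auto simp: assms(2) subset_iff orthonormal_frakB)
qed

lemma cspan_frakB_upto: "cspan (frakB_upto n k) = kbody n k"
proof
  show "cspan (frakB_upto n k) \<subseteq> kbody n k"
    using frakB_upto_subset_kbody unfolding kbody_def by (rule cspan_subset_cspan)
qed (rule kbody_subset_cspan_frakB_upto)

theorem mainTheorem1:
  fixes n :: nat
  shows "is_onb n (frakB n) (Lop n)
    \<and> (\<forall>K A B L C D. K \<subseteq> NN n \<and> A \<subseteq> NN n \<and> B \<subseteq> NN n \<and> L \<subseteq> NN n \<and> C \<subseteq> NN n
          \<and> D \<subseteq> NN n \<and> pdisj K A B \<and> pdisj L C D \<longrightarrow>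
          hs_inner n (mmul n (bK n K) (bcc n A B)) (mmul n (bK n L) (bcc n C D))
            = (if A = C \<and> B = D \<and> K = L then 2 ^ (n - card (A \<union> B)) else 0))
    \<and> (\<forall>k::nat. is_onb n (frakB n \<inter> kbody n k) (kbody n k)
          \<and> frakB n \<inter> kbody n k =
            {beta n K I J | K I J. K \<subseteq> NN n \<and> I \<subseteq> NN n \<and> J \<subseteq> NN n \<and> pdisj K I J
               \<and> (\<exists>l\<le>k. card I + card J + 2 * card K = 2 * l)})"
proof (intro conjI allI impI)
  have "cspan (frakB n) = Lop n"
    using cspan_subset_Lop[OF frakB_subset_Lop] Lop_subset_cspan_frakB by blast
  then show "is_onb n (frakB n) (Lop n)"
    by (intro is_onb_subset_frakB) simp_all
next
  fix K A B L C D
  assume "K \<subseteq> NN n \<and> A \<subseteq> NN n \<and> B \<subseteq> NN n \<and> L \<subseteq> NN n \<and> C \<subseteq> NN n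
          \<and> D \<subseteq> NN n \<and> pdisj K A B \<and> pdisj L C D"
  then show "hs_inner n (mmul n (bK n K) (bcc n A B)) (mmul n (bK n L) (bcc n C D))
            = (if A = C \<and> B = D \<and> K = L then 2 ^ (n - card (A \<union> B)) else 0)"
    by (intro hs_inner_bK_bcc) auto
next
  fix k
  show "is_onb n (frakB n \<inter> kbody n k) (kbody n k)"
    unfolding frakB_Int_kbody using frakB_upto_subset_frakB cspan_frakB_upto by (rule is_onb_subset_frakB)
  show "frakB n \<inter> kbody n k =
            {beta n K I J | K I J. K \<subseteq> NN n \<and> I \<subseteq> NN n \<and> J \<subseteq> NN n \<and> pdisj K I J
               \<and> (\<exists>l\<le>k. card I + card J + 2 * card K = 2 * l)}"
    unfolding frakB_Int_kbody frakB_upto_def ..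
qed

end
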